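(* Let $s$ be a positive integer and let $f_1,f_2,f_3\colon[s]^2\to\mathbb{Z}$ be strongly monotone functions. Define $f\colon[s]^3\to\mathbb{Z}^3$ by $f(x,y,z)=\bigl(f_1(x,y),f_2(x,z),f_3(y,z)\bigr)$. Then $f$ takes at least $s^2/6$ distinct values on $[s]^3$.
   Context: $[s]=\{1,\dots,s\}$. A function $g$ of two variables is strongly monotone if $g(x,y)\leq g(x',y)$, $g(x,y)\leq g(x,y')$ and $g(x,y)<g(x',y')$ whenever $x<x'$ and $y<y'$. *)

theory Defs
  imports Complex_Main
begin

definition strongly_monotone_on :: "nat \<Rightarrow> (nat \<Rightarrow> nat \<Rightarrow> int) \<Rightarrow> bool" where
  "strongly_monotone_on s g \<longleftrightarrow>
     (\<forall>x\<in>{1..s}. \<forall>x'\<in>{1..s}. \<forall>y\<in>{1..s}. \<forall>y'\<in>{1..s}.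
        (x < x' \<longrightarrow> g x y \<le> g x' y) \<and>
        (y < y' \<longrightarrow> g x y \<le> g x y') \<and>
        (x < x' \<and> y < y' \<longrightarrow> g x y < g x' y'))"

end

theory Submission
  imports Defs
begin

text \<open>Two points of a fibre of \<open>f\<close> can never increase strictly in two coordinates at once,
  since the component of \<open>f\<close> built from those two coordinates would then increase strictly as
  well. A set of such points in the cube has at most \<open>4s\<close> elements: among the points lowest
  in their \<open>z\<close>-column the difference \<open>x - y\<close> determines the point, and among the others
  \<open>x - z\<close> does. Hence the \<open>s\<^sup>3\<close> points of the cube meet at least \<open>s\<^sup>2/4\<close> fibres.\<close>

lemma card_le_card_image_mult:
  assumes "finite A" and "\<And>v. card {a \<in> A. f a = v} \<le> k"
  shows "card A \<le> card (f ` A) * k"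
proof -
  have "A = (\<Union>v \<in> f ` A. {a \<in> A. f a = v})" by auto
  then have "card A \<le> (\<Sum>v \<in> f ` A. card {a \<in> A. f a = v})"
    by (metis assms(1) card_UN_le finite_imageI)
  also have "\<dots> \<le> card (f ` A) * k"
    using sum_bounded_above[of "f ` A" "\<lambda>v. card {a \<in> A. f a = v}" k] assms(2) by simp
  finally show ?thesis .
qed

lemma card_le_of_inj_on_difference:
  fixes d :: "'a \<Rightarrow> int"
  assumes "inj_on d G" and "\<And>p. p \<in> G \<Longrightarrow> \<exists>a \<in> {1..s}. \<exists>b \<in> {1..s}. d p = int a - int b"
  shows "card G \<le> 2 * s"
proof -
  have "d ` G \<subseteq> {1 - int s .. int s - 1}"
    using assms(2) by force
  then have "card (d ` G) \<le> card {1 - int s .. int s - 1}"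
    by (intro card_mono) auto
  then show ?thesis
    using assms(1) by (simp add: card_image)
qed

lemma difference_eq_imp_eq:
  fixes a b a' b' :: nat
  assumes "int a - int b = int a' - int b'" and "\<not> (a < a' \<and> b < b')" and "\<not> (a' < a \<and> b' < b)"
  shows "a = a' \<and> b = b'"
  using assms by linarith

definition pairwise_antichain :: "(nat \<times> nat \<times> nat) set \<Rightarrow> bool" where
  "pairwise_antichain F \<longleftrightarrow>
     (\<forall>x y z x' y' z'. (x, y, z) \<in> F \<longrightarrow> (x', y', z') \<in> F \<longrightarrow>
        \<not> (x < x' \<and> y < y') \<and> \<not> (x < x' \<and> z < z') \<and> \<not> (y < y' \<and> z < z'))"

lemma inj_on_column_minima:
  assumes "pairwise_antichain F"
  shows "inj_on (\<lambda>(x, y, z). int x - int y) {(x, y, z) \<in> F. \<forall>z' < z. (x, y, z') \<notin> F}"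
proof (rule inj_onI, clarsimp)
  fix x y z x' y' z'
  assume p: "(x, y, z) \<in> F" "\<forall>z'' < z. (x, y, z'') \<notin> F"
    and q: "(x', y', z') \<in> F" "\<forall>z'' < z'. (x', y', z'') \<notin> F"
    and "int x - int y = int x' - int y'"
  with assms have "x = x' \<and> y = y'"
    unfolding pairwise_antichain_def by (metis difference_eq_imp_eq)
  with p q show "x = x' \<and> y = y' \<and> z = z'"
    by (metis linorder_neqE_nat)
qed

lemma inj_on_column_non_minima:
  assumes "pairwise_antichain F"
  shows "inj_on (\<lambda>(x, y, z). int x - int z) {(x, y, z) \<in> F. \<exists>z' < z. (x, y, z') \<in> F}"
proof (rule inj_onI, clarsimp)
  fix x y z x' y' z' z0 z1
  assume p: "(x, y, z) \<in> F" "z0 < z" "(x, y, z0) \<in> F"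
    and q: "(x', y', z') \<in> F" "z1 < z'" "(x', y', z1) \<in> F"
    and "int x - int z = int x' - int z'"
  with assms have xz: "x = x' \<and> z = z'"
    unfolding pairwise_antichain_def by (metis difference_eq_imp_eq)
  \<comment> \<open>\<open>y < y'\<close> would make \<open>(x, y, z0)\<close> increase strictly in \<open>y\<close> and \<open>z\<close> towards \<open>(x', y', z')\<close>\<close>
  have "\<not> y < y'" and "\<not> y' < y"
    using assms p q xz unfolding pairwise_antichain_def by blast+
  with xz show "x = x' \<and> y = y' \<and> z = z'" by simp
qed

lemma card_pairwise_antichain_le:
  assumes "F \<subseteq> {1..s} \<times> {1..s} \<times> {1..s}" and "pairwise_antichain F"
  shows "card F \<le> 4 * s"
proof -
  define L where "L = {(x, y, z) \<in> F. \<forall>z' < z. (x, y, z') \<notin> F}"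
  define U where "U = {(x, y, z) \<in> F. \<exists>z' < z. (x, y, z') \<in> F}"
  have "F = L \<union> U" unfolding L_def U_def by auto
  then have "card F \<le> card L + card U" by (metis card_Un_le)
  moreover have "card L \<le> 2 * s"
    using inj_on_column_minima[OF assms(2)] assms(1)
    by (intro card_le_of_inj_on_difference) (auto simp: L_def)
  moreover have "card U \<le> 2 * s"
    using inj_on_column_non_minima[OF assms(2)] assms(1)
    by (intro card_le_of_inj_on_difference) (auto simp: U_def)
  ultimately show ?thesis by simp
qed

lemma strongly_monotone_on_less:
  assumes "strongly_monotone_on s g" "x \<in> {1..s}" "x' \<in> {1..s}" "y \<in> {1..s}" "y' \<in> {1..s}"
    and "x < x'" "y < y'"
  shows "g x y < g x' y'"
  using assms unfolding strongly_monotone_on_def by blast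

lemma pairwise_antichain_fibre:
  assumes "strongly_monotone_on s f1" "strongly_monotone_on s f2" "strongly_monotone_on s f3"
  shows "pairwise_antichain
           {p \<in> {1..s} \<times> {1..s} \<times> {1..s}. (\<lambda>(x, y, z). (f1 x y, f2 x z, f3 y z)) p = v}"
    (is "pairwise_antichain ?F")
  unfolding pairwise_antichain_def
proof (intro allI impI)
  fix x y z x' y' z'
  assume "(x, y, z) \<in> ?F" and "(x', y', z') \<in> ?F"
  then have "x \<in> {1..s}" "y \<in> {1..s}" "z \<in> {1..s}" "x' \<in> {1..s}" "y' \<in> {1..s}" "z' \<in> {1..s}"
    and "f1 x y = f1 x' y'" "f2 x z = f2 x' z'" "f3 y z = f3 y' z'"
    by auto
  then show "\<not> (x < x' \<and> y < y') \<and> \<not> (x < x' \<and> z < z') \<and> \<not> (y < y' \<and> z < z')"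
    using strongly_monotone_on_less[OF assms(1)] strongly_monotone_on_less[OF assms(2)]
      strongly_monotone_on_less[OF assms(3)]
    by (metis less_irrefl)
qed

theorem lemma24:
  fixes s :: nat and f1 f2 f3 :: "nat \<Rightarrow> nat \<Rightarrow> int"
  assumes "s \<ge> 1"
    and "strongly_monotone_on s f1"
    and "strongly_monotone_on s f2"
    and "strongly_monotone_on s f3"
  shows "real (card ((\<lambda>(x, y, z). (f1 x y, f2 x z, f3 y z)) ` ({1..s} \<times> {1..s} \<times> {1..s})))
           \<ge> real s ^ 2 / 6"
proof -
  define A where "A = {1..s} \<times> {1..s} \<times> {1..s}"
  define f where "f = (\<lambda>(x, y, z). (f1 x y, f2 x z, f3 y z))"
  have "card {a \<in> A. f a = v} \<le> 4 * s" for v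
    using card_pairwise_antichain_le[OF _ pairwise_antichain_fibre[OF assms(2-4)]]
    unfolding A_def f_def by blast
  then have "card A \<le> card (f ` A) * (4 * s)"
    by (intro card_le_card_image_mult) (simp add: A_def)
  then have "s * s ^ 2 \<le> s * (4 * card (f ` A))"
    by (simp add: A_def power2_eq_square mult_ac)
  then have "s ^ 2 \<le> 4 * card (f ` A)"
    using assms(1) by simp
  then have "real s ^ 2 \<le> 4 * real (card (f ` A))"
    by (metis of_nat_le_iff of_nat_mult of_nat_numeral of_nat_power)
  then show ?thesis unfolding A_def f_def by simp
qed

end
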